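(* Let $v\ge1$, $n\ge1$, $\epsilon>0$, and let $(\mathcal{X},\mathcal{Y},\mathcal{I})$ be a $(v,b,r,\lambda)$-RPBD with $\mathcal{X}=\{1,\dots,v\}$. Let $Q(y|x)=\alpha e^\epsilon$ if $(x,y)\in\mathcal{I}$ and $Q(y|x)=\alpha$ otherwise, with $\alpha=\frac{1}{re^\epsilon+b-r}$. With $X_1,\dots,X_n$ i.i.d. $\sim P\in\Delta_v$ and $Y_i\sim Q(\cdot|X_i)$, the estimator $$\hat P_{n,x}(Y_1,\dots,Y_n)=\frac{1}{(r-\lambda)(e^\epsilon-1)}\left(\frac{N_x(Y_1,\dots,Y_n)}{n\alpha}-(\lambda e^\epsilon+(r-\lambda))\right),\quad N_x=\sum_{i=1}^n\mathbb{1}(Y_i\in\mathcal{I}_x),$$ is unbiased. Its risk under the squared loss is $$R_{v,n}(\ell_2^2,P,Q,\hat P_n)=\frac1n\left[\frac{re^\epsilon+(v-1)(\lambda e^\epsilon+r-\lambda)}{(r-\lambda)^2(e^\epsilon-1)^2v}\left[v(b-r)+(v-1)(r-\lambda)(e^\epsilon-1)\right]+\frac1v-\sum_{x\in\mathcal{X}}P_x^2\right],$$ and its worst-case risk is $$\sup_{P\in\Delta_v}R_{v,n}(\ell_2^2,P,Q,\hat P_n)=\frac{re^\epsilon+(v-1)(\lambda e^\epsilon+r-\lambda)}{(r-\lambda)^2(e^\epsilon-1)^2nv}\left[v(b-r)+(v-1)(r-\lambda)(e^\epsilon-1)\right],$$ attained when $P$ is the uniform distribution.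
   Context: $\Delta_v$ is the set of probability vectors on $\{1,\dots,v\}$. For an incidence structure $(\mathcal{X},\mathcal{Y},\mathcal{I})$, $\mathcal{I}\subset\mathcal{X}\times\mathcal{Y}$, let $\mathcal{I}_x=\{y:(x,y)\in\mathcal{I}\}$. For integers $v>0$, $b>r>\lambda\ge0$, a $(v,b,r,\lambda)$-RPBD (regular and pairwise-balanced design) is an incidence structure with $\mathcal{X},\mathcal{Y}$ nonempty finite, $|\mathcal{X}|=v$, $|\mathcal{Y}|=b$, $|\mathcal{I}_x|=r$ for all $x$, and $|\mathcal{I}_x\cap\mathcal{I}_{x'}|=\lambda$ for all $x\neq x'$. Risk: $R_{v,n}(\ell,P,Q,\hat P_n)=\mathbb{E}[\ell(P,\hat P_n(Y_1,\dots,Y_n))]$; $\ell_2^2(p,\hat p)=\sum_x(p_x-\hat p_x)^2$. *)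

theory Defs
  imports Complex_Main
begin

definition Ix :: "(nat \<times> 'b) set \<Rightarrow> nat \<Rightarrow> 'b set" where
  "Ix I x = {y. (x, y) \<in> I}"

definition RPBD :: "nat \<Rightarrow> nat \<Rightarrow> nat \<Rightarrow> nat \<Rightarrow> nat set \<Rightarrow> 'b set \<Rightarrow> (nat \<times> 'b) set \<Rightarrow> bool" where
  "RPBD v b r lam X Y I \<longleftrightarrow>
     0 < v \<and> r < b \<and> lam < r \<and>
     X \<noteq> {} \<and> Y \<noteq> {} \<and> finite X \<and> finite Y \<and> I \<subseteq> X \<times> Y \<and>
     card X = v \<and> card Y = b \<and>
     (\<forall>x\<in>X. card (Ix I x) = r) \<and>
     (\<forall>x\<in>X. \<forall>x'\<in>X. x \<noteq> x' \<longrightarrow> card (Ix I x \<inter> Ix I x') = lam)"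

definition prob_simplex :: "nat \<Rightarrow> (nat \<Rightarrow> real) set" where
  "prob_simplex v = {P. (\<forall>x\<in>{1..v}. 0 \<le> P x) \<and> (\<Sum>x=1..v. P x) = 1}"

definition uniform_dist :: "nat \<Rightarrow> (nat \<Rightarrow> real)" where
  "uniform_dist v = (\<lambda>x. 1 / real v)"

definition output_prob :: "nat \<Rightarrow> (nat \<Rightarrow> 'b \<Rightarrow> real) \<Rightarrow> (nat \<Rightarrow> real) \<Rightarrow> 'b \<Rightarrow> real" where
  "output_prob v Q P y = (\<Sum>x=1..v. P x * Q x y)"

definition expect_iid :: "'b set \<Rightarrow> nat \<Rightarrow> ('b \<Rightarrow> real) \<Rightarrow> ('b list \<Rightarrow> real) \<Rightarrow> real" where
  "expect_iid Y n q f = (\<Sum>ys\<in>{ys. set ys \<subseteq> Y \<and> length ys = n}. prod_list (map q ys) * f ys)"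

definition Ncount :: "(nat \<times> 'b) set \<Rightarrow> 'b list \<Rightarrow> nat \<Rightarrow> nat" where
  "Ncount I ys x = length (filter (\<lambda>y. y \<in> Ix I x) ys)"

definition estimator :: "(nat \<times> 'b) set \<Rightarrow> nat \<Rightarrow> nat \<Rightarrow> real \<Rightarrow> real \<Rightarrow> 'b list \<Rightarrow> nat \<Rightarrow> real" where
  "estimator I r lam eps alpha ys x =
     1 / ((real r - real lam) * (exp eps - 1)) *
     (real (Ncount I ys x) / (real (length ys) * alpha) - (real lam * exp eps + (real r - real lam)))"

definition l2sq :: "nat \<Rightarrow> (nat \<Rightarrow> real) \<Rightarrow> (nat \<Rightarrow> real) \<Rightarrow> real" where
  "l2sq v p ph = (\<Sum>x=1..v. (p x - ph x)^2)"

definition risk :: "nat \<Rightarrow> nat \<Rightarrow> 'b set \<Rightarrow> (nat \<Rightarrow> 'b \<Rightarrow> real) \<Rightarrow> (nat \<Rightarrow> real) \<Rightarrow> ('b list \<Rightarrow> nat \<Rightarrow> real) \<Rightarrow> real" where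
  "risk v n Y Q P est = expect_iid Y n (output_prob v Q P) (\<lambda>ys. l2sq v P (est ys))"

end

theory Submission
  imports Defs
begin

text \<open>
  The number N of reports landing in the block set I_x is binomial with success probability
  p = alpha (c + D P_x), where c = lam e^eps + r - lam and D = (r - lam)(e^eps - 1) only depend
  on the design parameters: a point x' lies in r blocks of I_x if x' = x and in lam of them
  otherwise.  The estimator is the affine function (N / (n alpha) - c) / D of N, so it is
  unbiased and its squared error in coordinate x is the variance n p (1 - p) rescaled by
  (n alpha D)^2.  Summing over x leaves the risk equal to a constant minus
  (sum_x P_x^2) / n, and the sum of squares over the simplex is minimal, 1 / v, at the
  uniform distribution.
\<close>

definition count_in :: "'b set \<Rightarrow> 'b list \<Rightarrow> nat" where
  "count_in A ys = length (filter (\<lambda>y. y \<in> A) ys)"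

lemma count_in_Cons:
  "real (count_in A (y # ys)) = (if y \<in> A then 1 else 0) + real (count_in A ys)"
  by (simp add: count_in_def)

lemma Ncount_eq_count_in: "Ncount I ys x = count_in (Ix I x) ys"
  by (simp add: Ncount_def count_in_def)

lemma expect_iid_Nil: "expect_iid Y 0 q f = f []"
proof -
  have "{ys. set ys \<subseteq> Y \<and> length ys = 0} = {[]}" by auto
  then show ?thesis unfolding expect_iid_def by simp
qed

lemma expect_iid_Suc:
  assumes "finite Y"
  shows "expect_iid Y (Suc n) q f = (\<Sum>y\<in>Y. q y * expect_iid Y n q (\<lambda>ys. f (y # ys)))"
proof -
  let ?L = "\<lambda>n. {ys. set ys \<subseteq> Y \<and> length ys = n}"
  have L_Suc: "?L (Suc n) = (\<lambda>(y, ys). y # ys) ` (Y \<times> ?L n)"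
    by (auto simp: length_Suc_conv image_iff)
  have inj: "inj_on (\<lambda>(y, ys). y # ys) (Y \<times> ?L n)" by (auto simp: inj_on_def)
  have "expect_iid Y (Suc n) q f
      = (\<Sum>(y, ys)\<in>Y \<times> ?L n. q y * (prod_list (map q ys) * f (y # ys)))"
    unfolding expect_iid_def L_Suc
    by (subst sum.reindex[OF inj]) (simp add: case_prod_beta mult.assoc)
  also have "\<dots> = (\<Sum>y\<in>Y. \<Sum>ys\<in>?L n. q y * (prod_list (map q ys) * f (y # ys)))"
    by (rule sum.cartesian_product[symmetric])
  also have "\<dots> = (\<Sum>y\<in>Y. q y * expect_iid Y n q (\<lambda>ys. f (y # ys)))"
    unfolding expect_iid_def by (simp add: sum_distrib_left)
  finally show ?thesis .
qed

lemma expect_iid_cong: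
  assumes "\<And>ys. set ys \<subseteq> Y \<Longrightarrow> length ys = n \<Longrightarrow> f ys = g ys"
  shows "expect_iid Y n q f = expect_iid Y n q g"
  unfolding expect_iid_def using assms by (intro sum.cong) auto

lemma expect_iid_add:
  "expect_iid Y n q (\<lambda>ys. f ys + g ys) = expect_iid Y n q f + expect_iid Y n q g"
  unfolding expect_iid_def by (simp add: sum.distrib distrib_left)

lemma expect_iid_cmult:
  "expect_iid Y n q (\<lambda>ys. a * f ys) = a * expect_iid Y n q f"
  unfolding expect_iid_def by (simp add: sum_distrib_left algebra_simps)

lemma expect_iid_sum:
  "expect_iid Y n q (\<lambda>ys. \<Sum>x\<in>S. f x ys) = (\<Sum>x\<in>S. expect_iid Y n q (f x))"
  unfolding expect_iid_def by (simp add: sum_distrib_left sum.swap[of _ S])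

context
  fixes Y :: "'b set" and q :: "'b \<Rightarrow> real"
  assumes finite_Y: "finite Y" and sum_q: "(\<Sum>y\<in>Y. q y) = 1"
begin

lemma expect_iid_const: "expect_iid Y n q (\<lambda>_. a) = a"
  by (induction n) (simp_all add: expect_iid_Nil expect_iid_Suc[OF finite_Y] sum_q
      flip: sum_distrib_right)

lemma sum_indicator_weighted:
  "(\<Sum>y\<in>Y. q y * (if y \<in> A then 1 else 0)) = (\<Sum>y\<in>Y \<inter> A. q y)"
proof -
  have "(\<Sum>y\<in>Y. q y * (if y \<in> A then 1 else 0)) = (\<Sum>y\<in>Y. if y \<in> A then q y else 0)"
    by (intro sum.cong) auto
  then show ?thesis using finite_Y by (simp add: sum.inter_filter Int_def)
qed

lemma expect_iid_count_in:
  "expect_iid Y n q (\<lambda>ys. real (count_in A ys)) = real n * (\<Sum>y\<in>Y \<inter> A. q y)"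
proof (induction n)
  case 0
  then show ?case by (simp add: expect_iid_Nil count_in_def)
next
  case (Suc n)
  let ?p = "\<Sum>y\<in>Y \<inter> A. q y"
  have "expect_iid Y (Suc n) q (\<lambda>ys. real (count_in A ys))
      = (\<Sum>y\<in>Y. q y * ((if y \<in> A then 1 else 0) + real n * ?p))"
    by (simp add: expect_iid_Suc[OF finite_Y] count_in_Cons expect_iid_add expect_iid_const Suc)
  also have "\<dots> = ?p + real n * ?p"
    by (simp add: distrib_left sum.distrib sum_indicator_weighted sum_q flip: sum_distrib_right)
  finally show ?case by (simp add: algebra_simps)
qed

lemma expect_iid_count_in_variance:
  fixes A :: "'b set"
  defines "p \<equiv> \<Sum>y\<in>Y \<inter> A. q y"
  shows "expect_iid Y n q (\<lambda>ys. (real (count_in A ys) - real n * p)\<^sup>2) = real n * p * (1 - p)"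
proof (induction n)
  case 0
  then show ?case by (simp add: expect_iid_Nil count_in_def)
next
  case (Suc n)
  let ?i = "\<lambda>y. if y \<in> A then 1 else 0 :: real"
  let ?dev = "\<lambda>ys. real (count_in A ys) - real n * p"
  have centered: "expect_iid Y n q ?dev = 0"
    using expect_iid_add[of Y n q "\<lambda>ys. real (count_in A ys)" "\<lambda>_. - real n * p"]
    by (simp add: expect_iid_count_in expect_iid_const p_def)
  have step: "expect_iid Y n q (\<lambda>ys. (real (count_in A (y # ys)) - real (Suc n) * p)\<^sup>2)
      = (?i y - p)\<^sup>2 + real n * p * (1 - p)" for y
  proof -
    have "expect_iid Y n q (\<lambda>ys. (real (count_in A (y # ys)) - real (Suc n) * p)\<^sup>2)
        = expect_iid Y n q (\<lambda>ys. (?i y - p)\<^sup>2 + (2 * (?i y - p) * ?dev ys + (?dev ys)\<^sup>2))"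
      by (intro expect_iid_cong) (simp add: count_in_Cons power2_eq_square algebra_simps)
    then show ?thesis
      by (simp add: expect_iid_add expect_iid_cmult expect_iid_const centered Suc)
  qed
  have "(\<Sum>y\<in>Y. q y * (?i y - p)\<^sup>2) = (\<Sum>y\<in>Y. q y * ?i y * (1 - 2 * p) + q y * p\<^sup>2)"
    by (intro sum.cong) (auto simp: power2_eq_square algebra_simps)
  also have "\<dots> = (\<Sum>y\<in>Y. q y * ?i y) * (1 - 2 * p) + (\<Sum>y\<in>Y. q y) * p\<^sup>2"
    by (simp add: sum.distrib sum_distrib_right)
  also have "\<dots> = p * (1 - p)"
    by (simp add: sum_indicator_weighted sum_q p_def power2_eq_square algebra_simps)
  finally have spread: "(\<Sum>y\<in>Y. q y * (?i y - p)\<^sup>2) = p * (1 - p)" .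
  have "expect_iid Y (Suc n) q (\<lambda>ys. (real (count_in A ys) - real (Suc n) * p)\<^sup>2)
      = (\<Sum>y\<in>Y. q y * (?i y - p)\<^sup>2) + (\<Sum>y\<in>Y. q y) * (real n * p * (1 - p))"
    unfolding expect_iid_Suc[OF finite_Y] step
    by (simp add: distrib_left sum.distrib sum_distrib_right)
  then show ?case
    by (simp add: spread sum_q algebra_simps)
qed

end

lemma sum_power2_ge_square_sum_div_card:
  fixes f :: "'a \<Rightarrow> real"
  assumes "finite S" "S \<noteq> {}"
  shows "(sum f S)\<^sup>2 / real (card S) \<le> (\<Sum>x\<in>S. (f x)\<^sup>2)"
proof -
  define m where "m = sum f S / real (card S)"
  have card: "real (card S) > 0" using assms by (simp add: card_gt_0_iff)
  have "0 \<le> (\<Sum>x\<in>S. (f x - m)\<^sup>2)" by (simp add: sum_nonneg)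
  also have "\<dots> = (\<Sum>x\<in>S. (f x)\<^sup>2) - 2 * m * sum f S + real (card S) * m\<^sup>2"
    by (simp add: power2_diff sum.distrib sum_subtractf flip: sum_distrib_left sum_distrib_right)
  also have "\<dots> = (\<Sum>x\<in>S. (f x)\<^sup>2) - (sum f S)\<^sup>2 / real (card S)"
    using card by (simp add: m_def power2_eq_square field_simps)
  finally show ?thesis by simp
qed

lemma sum_if_mem:
  assumes "finite B"
  shows "(\<Sum>y\<in>B. if y \<in> A then a else c)
       = a * real (card (B \<inter> A)) + c * (real (card B) - real (card (B \<inter> A)))"
proof -
  have "card (B - A) = card B - card (B \<inter> A)"
    using assms by (metis Diff_Int2 card_Diff_subset_Int finite_Int inf.cobounded1 card_Diff_subset)
  moreover have "card (B \<inter> A) \<le> card B" using assms by (simp add: card_mono)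
  ultimately show ?thesis using assms by (simp add: sum.If_cases Int_def Diff_eq of_nat_diff)
qed

lemma uniform_dist_in_prob_simplex: "0 < v \<Longrightarrow> uniform_dist v \<in> prob_simplex v"
  by (simp add: prob_simplex_def uniform_dist_def)

lemma prob_simplex_sum_power2_ge:
  assumes "P \<in> prob_simplex v" "0 < v"
  shows "1 / real v \<le> (\<Sum>x=1..v. (P x)\<^sup>2)"
  using sum_power2_ge_square_sum_div_card[of "{1..v}" P] assms by (simp add: prob_simplex_def)

locale rpbd_channel =
  fixes v b r lam :: nat and Y :: "'b set" and I :: "(nat \<times> 'b) set" and eps :: real
  assumes rpbd: "RPBD v b r lam {1..v} Y I" and eps_pos: "0 < eps"
begin

definition alpha :: real where
  "alpha = 1 / (real r * exp eps + real b - real r)"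

definition Q :: "nat \<Rightarrow> 'b \<Rightarrow> real" where
  "Q x y = (if (x, y) \<in> I then alpha * exp eps else alpha)"

definition hit_offset :: real where
  "hit_offset = real lam * exp eps + real r - real lam"

definition hit_slope :: real where
  "hit_slope = (real r - real lam) * (exp eps - 1)"

definition risk_const :: real where
  "risk_const = (real r * exp eps + (real v - 1) * (real lam * exp eps + real r - real lam))
                / ((real r - real lam)^2 * (exp eps - 1)^2 * real v)
              * (real v * (real b - real r) + (real v - 1) * (real r - real lam) * (exp eps - 1))"

lemma finite_Y: "finite Y" and card_Y: "card Y = b"
  and lam_less_r: "lam < r" and r_less_b: "r < b" and v_pos: "0 < v"
  and Ix_subset: "Ix I x \<subseteq> Y"
  and card_Ix: "x \<in> {1..v} \<Longrightarrow> card (Ix I x) = r"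
  and card_Ix_Int:
    "x \<in> {1..v} \<Longrightarrow> x' \<in> {1..v} \<Longrightarrow> x \<noteq> x' \<Longrightarrow> card (Ix I x \<inter> Ix I x') = lam"
  using rpbd unfolding RPBD_def Ix_def by auto

lemma finite_Ix: "finite (Ix I x)"
  using finite_subset[OF Ix_subset finite_Y] .

lemma hit_slope_pos: "hit_slope > 0"
  using eps_pos lam_less_r by (simp add: hit_slope_def)

lemma alpha_normalizes: "alpha * (hit_offset + hit_slope + (real b - real r)) = 1"
  and alpha_pos: "alpha > 0"
proof -
  have "real r \<le> real r * exp eps"
    using eps_pos by (simp add: mult_le_cancel_left1)
  then have "real r * exp eps + real b - real r > 0"
    using r_less_b by linarith
  moreover have "hit_offset + hit_slope + (real b - real r) = real r * exp eps + real b - real r"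
    by (simp add: hit_offset_def hit_slope_def algebra_simps)
  ultimately show "alpha * (hit_offset + hit_slope + (real b - real r)) = 1" "alpha > 0"
    by (simp_all add: alpha_def)
qed

lemma Q_eq: "Q x y = (if y \<in> Ix I x then alpha * exp eps else alpha)"
  by (simp add: Q_def Ix_def)

lemma sum_Q: "x \<in> {1..v} \<Longrightarrow> (\<Sum>y\<in>Y. Q x y) = 1"
  using alpha_normalizes Ix_subset[of x]
  by (simp add: Q_eq sum_if_mem finite_Y card_Ix card_Y Int_absorb1 hit_offset_def hit_slope_def
      algebra_simps)

lemma sum_Q_block:
  assumes "x \<in> {1..v}" "x' \<in> {1..v}"
  shows "(\<Sum>y\<in>Ix I x. Q x' y) = (if x' = x then alpha * exp eps * real r else alpha * hit_offset)"
  using assms card_Ix_Int[of x x']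
  by (simp add: Q_eq sum_if_mem finite_Ix card_Ix Int_commute hit_offset_def algebra_simps)

lemma estimator_eq:
  assumes "length ys = n"
  shows "estimator I r lam eps alpha ys x
       = (real (count_in (Ix I x) ys) / (real n * alpha) - hit_offset) / hit_slope"
  using assms by (simp add: estimator_def Ncount_eq_count_in hit_offset_def hit_slope_def)

lemma risk_const_plus_inverse:
  "risk_const + 1 / real v
     = (real v * hit_offset * (real b - real r + hit_slope)
        + hit_slope * (real b - real r + hit_slope - hit_offset)) / hit_slope\<^sup>2"
proof -
  have "real r * exp eps + (real v - 1) * (real lam * exp eps + real r - real lam)
      = real v * hit_offset + hit_slope"
    by (simp add: hit_offset_def hit_slope_def algebra_simps)
  moreover have "(real r - real lam)^2 * (exp eps - 1)^2 = hit_slope\<^sup>2"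
    by (simp add: hit_slope_def power_mult_distrib)
  moreover have "(real v - 1) * (real r - real lam) * (exp eps - 1) = (real v - 1) * hit_slope"
    by (simp add: hit_slope_def)
  ultimately have "risk_const = (real v * hit_offset + hit_slope)
      * (real v * (real b - real r) + (real v - 1) * hit_slope) / (hit_slope\<^sup>2 * real v)"
    by (simp add: risk_const_def)
  then show ?thesis
    using hit_slope_pos v_pos by (simp add: field_simps power2_eq_square)
qed

context
  fixes P :: "nat \<Rightarrow> real"
  assumes P: "P \<in> prob_simplex v"
begin

lemma sum_P: "(\<Sum>x=1..v. P x) = 1"
  using P by (simp add: prob_simplex_def)

lemma sum_output_prob: "(\<Sum>y\<in>Y. output_prob v Q P y) = 1"
proof -
  have "(\<Sum>y\<in>Y. output_prob v Q P y) = (\<Sum>x=1..v. P x * (\<Sum>y\<in>Y. Q x y))"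
    unfolding output_prob_def by (simp add: sum.swap[of _ Y] sum_distrib_left)
  then show ?thesis using sum_P by (simp add: sum_Q)
qed

lemma hit_prob:
  assumes x: "x \<in> {1..v}"
  shows "(\<Sum>y\<in>Y \<inter> Ix I x. output_prob v Q P y) = alpha * (hit_offset + hit_slope * P x)"
proof -
  have "(\<Sum>y\<in>Y \<inter> Ix I x. output_prob v Q P y) = (\<Sum>x'=1..v. P x' * (\<Sum>y\<in>Ix I x. Q x' y))"
    unfolding output_prob_def using Ix_subset[of x]
    by (simp add: Int_absorb1 sum.swap[of _ "Ix I x"] sum_distrib_left)
  also have "\<dots> = (\<Sum>x'=1..v. P x' * (alpha * hit_offset)
                    + (if x' = x then P x' * (alpha * exp eps * real r - alpha * hit_offset) else 0))"
    by (intro sum.cong) (auto simp: sum_Q_block[OF x] algebra_simps)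
  also have "\<dots> = alpha * hit_offset + P x * (alpha * exp eps * real r - alpha * hit_offset)"
    using x sum_P by (simp add: sum.distrib flip: sum_distrib_right)
  also have "\<dots> = alpha * (hit_offset + hit_slope * P x)"
    by (simp add: hit_offset_def hit_slope_def algebra_simps)
  finally show ?thesis .
qed

context
  fixes n :: nat and x :: nat
  assumes n: "0 < n" and x: "x \<in> {1..v}"
begin

lemma estimator_unbiased:
  "expect_iid Y n (output_prob v Q P) (\<lambda>ys. estimator I r lam eps alpha ys x) = P x"
proof -
  let ?N = "\<lambda>ys. real (count_in (Ix I x) ys)"
  have "expect_iid Y n (output_prob v Q P) (\<lambda>ys. estimator I r lam eps alpha ys x)
      = expect_iid Y n (output_prob v Q P)
          (\<lambda>ys. 1 / (real n * alpha * hit_slope) * ?N ys + - hit_offset / hit_slope)"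
    using hit_slope_pos alpha_pos
    by (intro expect_iid_cong) (simp add: estimator_eq diff_divide_distrib)
  also have "\<dots> = P x"
    unfolding expect_iid_add expect_iid_cmult expect_iid_const[OF finite_Y sum_output_prob]
      expect_iid_count_in[OF finite_Y sum_output_prob] hit_prob[OF x]
    using n hit_slope_pos alpha_pos by (simp add: field_simps)
  finally show ?thesis .
qed

lemma estimator_mse:
  "expect_iid Y n (output_prob v Q P) (\<lambda>ys. (P x - estimator I r lam eps alpha ys x)\<^sup>2)
     = (hit_offset + hit_slope * P x) * (real b - real r + hit_slope * (1 - P x))
       / (real n * hit_slope\<^sup>2)"
proof -
  define p where "p = alpha * (hit_offset + hit_slope * P x)"
  have miss: "1 - p = alpha * (real b - real r + hit_slope * (1 - P x))"
    using alpha_normalizes by (simp add: p_def algebra_simps)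
  have "expect_iid Y n (output_prob v Q P) (\<lambda>ys. (P x - estimator I r lam eps alpha ys x)\<^sup>2)
      = expect_iid Y n (output_prob v Q P)
          (\<lambda>ys. 1 / (real n * alpha * hit_slope)\<^sup>2 * (real (count_in (Ix I x) ys) - real n * p)\<^sup>2)"
    using n hit_slope_pos alpha_pos
    by (intro expect_iid_cong) (simp add: estimator_eq p_def power2_eq_square field_simps)
  also have "\<dots> = real n * p * (1 - p) / (real n * alpha * hit_slope)\<^sup>2"
  proof -
    have "p = (\<Sum>y\<in>Y \<inter> Ix I x. output_prob v Q P y)"
      by (simp add: hit_prob[OF x] p_def)
    then show ?thesis
      by (simp only: expect_iid_cmult expect_iid_count_in_variance[OF finite_Y sum_output_prob])
        simp
  qed
  also have "\<dots> = (hit_offset + hit_slope * P x) * (real b - real r + hit_slope * (1 - P x))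
       / (real n * hit_slope\<^sup>2)"
    unfolding miss unfolding p_def using n hit_slope_pos alpha_pos
    by (simp add: power2_eq_square field_simps)
  finally show ?thesis .
qed

end

lemma risk_eq:
  assumes n: "0 < n"
  shows "risk v n Y Q P (estimator I r lam eps alpha)
       = 1 / real n * (risk_const + 1 / real v - (\<Sum>x=1..v. (P x)\<^sup>2))"
proof -
  let ?B = "real b - real r"
  have "risk v n Y Q P (estimator I r lam eps alpha)
      = (\<Sum>x=1..v. (hit_offset + hit_slope * P x) * (?B + hit_slope * (1 - P x)))
        / (real n * hit_slope\<^sup>2)"
    unfolding risk_def l2sq_def expect_iid_sum
    by (simp add: estimator_mse[OF n] sum_divide_distrib)
  also have "(\<Sum>x=1..v. (hit_offset + hit_slope * P x) * (?B + hit_slope * (1 - P x)))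
      = (\<Sum>x=1..v. hit_offset * (?B + hit_slope) + hit_slope * (?B + hit_slope - hit_offset) * P x
                      - hit_slope\<^sup>2 * (P x)\<^sup>2)"
    by (intro sum.cong) (simp_all add: algebra_simps power2_eq_square)
  also have "\<dots> = real v * hit_offset * (?B + hit_slope) + hit_slope * (?B + hit_slope - hit_offset)
        - hit_slope\<^sup>2 * (\<Sum>x=1..v. (P x)\<^sup>2)"
    using sum_P by (simp add: sum.distrib sum_subtractf flip: sum_distrib_left)
  finally show ?thesis
    unfolding risk_const_plus_inverse using n hit_slope_pos by (simp add: field_simps)
qed

end

lemma risk_uniform:
  "0 < n \<Longrightarrow>
    risk v n Y Q (uniform_dist v) (estimator I r lam eps alpha) = risk_const / real n"
  using risk_eq[OF uniform_dist_in_prob_simplex[OF v_pos]] v_pos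
  by (simp add: uniform_dist_def power2_eq_square)

lemma risk_le_risk_const:
  "P \<in> prob_simplex v \<Longrightarrow> 0 < n \<Longrightarrow>
    risk v n Y Q P (estimator I r lam eps alpha) \<le> risk_const / real n"
  using risk_eq[of P n] prob_simplex_sum_power2_ge[OF _ v_pos, of P]
  by (simp add: divide_right_mono)

lemma SUP_risk:
  "0 < n \<Longrightarrow>
    (SUP P\<in>prob_simplex v. risk v n Y Q P (estimator I r lam eps alpha)) = risk_const / real n"
  using uniform_dist_in_prob_simplex[OF v_pos] risk_uniform risk_le_risk_const
  by (intro cSup_eq_maximum) (auto intro: image_eqI[where x = "uniform_dist v"])

end

theorem theorem6:
  fixes v b r lam n :: nat and eps :: real and Y :: "'b set" and I :: "(nat \<times> 'b) set"
  assumes rpbd: "RPBD v b r lam {1..v} Y I"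
    and v: "1 \<le> v" and n: "1 \<le> n" and eps: "0 < eps"
  defines "alpha \<equiv> 1 / (real r * exp eps + real b - real r)"
  defines "Q \<equiv> (\<lambda>x y. if (x, y) \<in> I then alpha * exp eps else alpha)"
  defines "Ph \<equiv> estimator I r lam eps alpha"
  defines "C \<equiv> (real r * exp eps + (real v - 1) * (real lam * exp eps + real r - real lam))
                / ((real r - real lam)^2 * (exp eps - 1)^2 * real v)
              * (real v * (real b - real r) + (real v - 1) * (real r - real lam) * (exp eps - 1))"
  shows "(\<forall>P\<in>prob_simplex v. \<forall>x\<in>{1..v}.
            expect_iid Y n (output_prob v Q P) (\<lambda>ys. Ph ys x) = P x)
       \<and> (\<forall>P\<in>prob_simplex v.
            risk v n Y Q P Ph = 1 / real n * (C + 1 / real v - (\<Sum>x=1..v. (P x)^2)))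
       \<and> (SUP P\<in>prob_simplex v. risk v n Y Q P Ph) = C / real n
       \<and> risk v n Y Q (uniform_dist v) Ph = C / real n"
proof -
  interpret ch: rpbd_channel v b r lam Y I eps
    using rpbd eps by unfold_locales
  have alpha: "alpha = ch.alpha" by (simp add: alpha_def ch.alpha_def)
  have "Q = ch.Q" by (simp add: Q_def ch.Q_def alpha fun_eq_iff)
  moreover have "Ph = estimator I r lam eps ch.alpha" by (simp add: Ph_def alpha)
  moreover have "C = ch.risk_const" by (simp add: C_def ch.risk_const_def)
  moreover have "0 < n" using n by simp
  ultimately show ?thesis
    using ch.estimator_unbiased ch.risk_eq ch.SUP_risk ch.risk_uniform by simp
qed

end
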